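(* Let $\sigma=(a_1,\ldots,a_s)$ be an $r$-good partition of $r$ and let $H=H(n,r,q\mid\sigma)$. Let $A,B$ be disjoint sets with $A\cup B=\{1,\ldots,s\}$ such that, with $a=\sum_{j\in A}a_j$ and $b=\sum_{j\in B}a_j$, one has $\gcd(a,b)=\gcd(a,r)=\gcd(b,r)=1$, and let $L=\mathrm{lcm}(a,b)$. If $r\mid n$ and $L\mid q$, then $H$ has a perfect matching, that is, $\nu(H)=\frac{nq}{r}$.
   Context: A $\sigma$-hypergraph $H=H(n,r,q\mid\sigma)$, for a partition $\sigma$ of $r$, is the $r$-uniform hypergraph whose vertex set is the disjoint union of $n$ classes $V_1,\ldots,V_n$, each of size $q$; an $r$-subset $K$ of vertices is an edge iff the multiset of non-zero values $|K\cap V_i|$ equals $\sigma$. The partition $\sigma$ is $r$-good if there is a subsequence $\pi$ of $(a_1,\ldots,a_s)$ (a selection of some of the parts, by index) such that $\sum_{a_j\in\pi}a_j$ is coprime to $r$. A perfect matching is a set of pairwise vertex-disjoint edges covering every vertex; $\nu(H)$ is the maximum size of a matching. *)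

theory Defs
  imports Main "HOL-Library.Multiset"
begin

text \<open>Vertices are pairs (i,k) with i < n (class index)
  and k < q (position inside the class); the class V_i is {i} \<times> {..<q}.\<close>

definition is_partition :: "nat list \<Rightarrow> nat \<Rightarrow> bool" where
  "is_partition \<sigma> r \<longleftrightarrow> (\<forall>x\<in>set \<sigma>. 0 < x) \<and> sum_list \<sigma> = r"

definition r_good :: "nat list \<Rightarrow> nat \<Rightarrow> bool" where
  "r_good \<sigma> r \<longleftrightarrow> (\<exists>J \<subseteq> {..<length \<sigma>}. coprime (\<Sum>j\<in>J. \<sigma> ! j) r)"

definition sh_vertices :: "nat \<Rightarrow> nat \<Rightarrow> (nat \<times> nat) set" where
  "sh_vertices n q = {..<n} \<times> {..<q}"

definition sh_class :: "nat \<Rightarrow> nat \<Rightarrow> (nat \<times> nat) set" where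
  "sh_class q i = {i} \<times> {..<q}"

definition sh_edges :: "nat \<Rightarrow> nat \<Rightarrow> nat \<Rightarrow> nat list \<Rightarrow> (nat \<times> nat) set set" where
  "sh_edges n r q \<sigma> = {K. K \<subseteq> sh_vertices n q \<and> card K = r \<and>
     {# card (K \<inter> sh_class q i). i \<in># {# i \<in># mset_set {..<n}. card (K \<inter> sh_class q i) \<noteq> 0 #} #}
       = mset \<sigma>}"

definition is_matching :: "nat \<Rightarrow> nat \<Rightarrow> nat \<Rightarrow> nat list \<Rightarrow> (nat \<times> nat) set set \<Rightarrow> bool" where
  "is_matching n r q \<sigma> M \<longleftrightarrow> M \<subseteq> sh_edges n r q \<sigma> \<and>
     (\<forall>e\<in>M. \<forall>f\<in>M. e \<noteq> f \<longrightarrow> e \<inter> f = {})"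

definition is_perfect_matching :: "nat \<Rightarrow> nat \<Rightarrow> nat \<Rightarrow> nat list \<Rightarrow> (nat \<times> nat) set set \<Rightarrow> bool" where
  "is_perfect_matching n r q \<sigma> M \<longleftrightarrow> is_matching n r q \<sigma> M \<and> \<Union>M = sh_vertices n q"

text \<open>Matching number nu(H): maximum size of a matching (all matchings are finite
  subsets of the finite edge set).\<close>
definition sh_nu :: "nat \<Rightarrow> nat \<Rightarrow> nat \<Rightarrow> nat list \<Rightarrow> nat" where
  "sh_nu n r q \<sigma> = Max (card ` {M. is_matching n r q \<sigma> M})"

end

theory Submission
  imports Defs "HOL-Number_Theory.Cong"
begin

text \<open>Split the n classes into n/r blocks of r consecutive classes; in every block the parts
  indexed by A use the first a classes and those indexed by B the last b. Number the a vertices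
  that the A-parts contribute to an edge by h, a bijection onto {0..<a}. For e < q the e-th edge
  of the block sends the t-th vertex of part j to class (e + h(j,0)) mod a, at position
  h(j,t) * (q div a) + e div a. Distinct parts get distinct classes, because the h(j,0) are
  distinct residues mod a, and the pair (e, (j,t)) is recovered from the vertex, so the q edges
  of a block cover its a * q A-vertices exactly once. This only needs a | q; likewise b | q for B.
  The resulting n q / r disjoint edges cover all vertices, and counting shows no matching is
  larger.\<close>

text \<open>The slot (j, t), t < \<sigma> ! j, stands for the t-th of the vertices that part j
  contributes to an edge.\<close>

definition slots :: "nat list \<Rightarrow> (nat \<times> nat) set" where
  "slots \<sigma> = Sigma {..<length \<sigma>} (\<lambda>j. {..<\<sigma> ! j})"

definition separates_parts :: "(nat \<times> nat) set \<Rightarrow> (nat \<times> nat \<Rightarrow> nat \<times> nat) \<Rightarrow> bool" where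
  "separates_parts P \<phi> \<longleftrightarrow> (\<forall>p\<in>P. \<forall>p'\<in>P. fst (\<phi> p) = fst (\<phi> p') \<longleftrightarrow> fst p = fst p')"

lemma card_slots: "card (slots \<sigma>) = sum_list \<sigma>"
  unfolding slots_def by (simp add: card_SigmaI sum_list_sum_nth atLeast0LessThan)

lemma mset_conv_image_mset_nth: "mset \<sigma> = image_mset (\<lambda>j. \<sigma> ! j) (mset_set {..<length \<sigma>})"
proof -
  have "mset \<sigma> = mset (map (\<lambda>j. \<sigma> ! j) [0..<length \<sigma>])" by (simp add: map_nth)
  then show ?thesis by (simp add: atLeast0LessThan)
qed

lemma class_profile_eq_mset:
  assumes pos: "\<forall>x\<in>set \<sigma>. 0 < x"
    and c_inj: "inj_on c {..<length \<sigma>}" and c_lt: "\<And>j. j < length \<sigma> \<Longrightarrow> c j < n"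
    and card_class: "\<And>j. j < length \<sigma> \<Longrightarrow> card (K \<inter> sh_class q (c j)) = \<sigma> ! j"
    and empty_class: "\<And>i. i \<notin> c ` {..<length \<sigma>} \<Longrightarrow> K \<inter> sh_class q i = {}"
  shows "{# card (K \<inter> sh_class q i). i \<in># {# i \<in># mset_set {..<n}. card (K \<inter> sh_class q i) \<noteq> 0 #} #}
    = mset \<sigma>"
proof -
  let ?s = "length \<sigma>"
  have occupied: "{i \<in> {..<n}. card (K \<inter> sh_class q i) \<noteq> 0} = c ` {..<?s}"
  proof (intro equalityI subsetI)
    fix i assume "i \<in> {i \<in> {..<n}. card (K \<inter> sh_class q i) \<noteq> 0}"
    then show "i \<in> c ` {..<?s}" using empty_class by fastforce
  next
    fix i assume "i \<in> c ` {..<?s}"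
    then obtain j where "j < ?s" "i = c j" by blast
    moreover have "0 < \<sigma> ! j" using pos \<open>j < ?s\<close> by simp
    ultimately show "i \<in> {i \<in> {..<n}. card (K \<inter> sh_class q i) \<noteq> 0}"
      using card_class c_lt by simp
  qed
  have "{# card (K \<inter> sh_class q i). i \<in># {# i \<in># mset_set {..<n}. card (K \<inter> sh_class q i) \<noteq> 0 #} #}
      = image_mset (\<lambda>i. card (K \<inter> sh_class q i)) (image_mset c (mset_set {..<?s}))"
    using occupied c_inj by (simp add: image_mset_mset_set)
  also have "\<dots> = image_mset (\<lambda>j. \<sigma> ! j) (mset_set {..<?s})"
    by (simp add: multiset.map_comp o_def) (rule image_mset_cong, simp add: card_class)
  also have "\<dots> = mset \<sigma>" by (simp add: mset_conv_image_mset_nth)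
  finally show ?thesis .
qed

lemma placement_in_sh_edges:
  assumes pos: "\<forall>x\<in>set \<sigma>. 0 < x"
    and inj: "inj_on \<phi> (slots \<sigma>)"
    and sub: "\<phi> ` slots \<sigma> \<subseteq> sh_vertices n q"
    and sep: "separates_parts (slots \<sigma>) \<phi>"
  shows "\<phi> ` slots \<sigma> \<in> sh_edges n (sum_list \<sigma>) q \<sigma>"
proof -
  let ?K = "\<phi> ` slots \<sigma>" and ?s = "length \<sigma>"
  define c where "c j = fst (\<phi> (j, 0))" for j
  have first_slot: "(j, 0) \<in> slots \<sigma>" if "j < ?s" for j
    using that pos unfolding slots_def by auto
  have cls: "fst (\<phi> p) = c (fst p)" if "p \<in> slots \<sigma>" for p
    using that sep first_slot unfolding separates_parts_def c_def slots_def by force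
  have c_inj: "inj_on c {..<?s}"
    using sep first_slot unfolding separates_parts_def c_def inj_on_def by fastforce
  have c_lt: "c j < n" if "j < ?s" for j
    using sub first_slot[OF that] unfolding c_def sh_vertices_def by force
  have K_class: "?K \<inter> sh_class q i = \<phi> ` {p \<in> slots \<sigma>. c (fst p) = i}" for i
    using sub cls unfolding sh_class_def sh_vertices_def by fastforce
  have card_class: "card (?K \<inter> sh_class q (c j)) = \<sigma> ! j" if "j < ?s" for j
  proof -
    have "{p \<in> slots \<sigma>. c (fst p) = c j} = {j} \<times> {..<\<sigma> ! j}"
      using that c_inj unfolding slots_def by (auto dest: inj_onD)
    moreover have "inj_on \<phi> ({j} \<times> {..<\<sigma> ! j})"
      by (rule inj_on_subset[OF inj]) (use that in \<open>auto simp: slots_def\<close>)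
    ultimately show ?thesis
      using K_class[of "c j"] by (simp add: card_image)
  qed
  have empty_class: "?K \<inter> sh_class q i = {}" if "i \<notin> c ` {..<?s}" for i
    using that K_class[of i] unfolding slots_def by auto
  show ?thesis
    unfolding sh_edges_def
    using class_profile_eq_mset[OF pos c_inj c_lt card_class empty_class] sub inj
    by (simp add: card_image card_slots)
qed

lemma finite_sh_vertices: "finite (sh_vertices n q)"
  and card_sh_vertices: "card (sh_vertices n q) = n * q"
  unfolding sh_vertices_def by auto

lemma sh_edges_subset_Pow: "sh_edges n r q \<sigma> \<subseteq> Pow (sh_vertices n q)"
  unfolding sh_edges_def by auto

lemma finite_sh_edges: "finite (sh_edges n r q \<sigma>)"
  using sh_edges_subset_Pow finite_sh_vertices by (metis finite_Pow_iff finite_subset)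

lemma card_Union_matching:
  assumes "is_matching n r q \<sigma> M"
  shows "card (\<Union>M) = card M * r"
proof -
  have edges: "M \<subseteq> sh_edges n r q \<sigma>" using assms unfolding is_matching_def by blast
  have "card (\<Union>M) = (\<Sum>e\<in>M. card e)"
  proof (rule card_Union_disjoint)
    show "pairwise disjnt M"
      using assms unfolding is_matching_def pairwise_def disjnt_def by blast
    show "finite e" if "e \<in> M" for e
      using that edges sh_edges_subset_Pow finite_sh_vertices by (meson PowD finite_subset subsetD)
  qed
  also have "\<dots> = (\<Sum>e\<in>M. r)"
    using edges unfolding sh_edges_def by (intro sum.cong) auto
  also have "\<dots> = card M * r" by simp
  finally show ?thesis .
qed

lemma card_matching_mult_le:
  assumes "is_matching n r q \<sigma> M"
  shows "card M * r \<le> n * q"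
proof -
  have "\<Union>M \<subseteq> sh_vertices n q"
    using assms sh_edges_subset_Pow[of n r q \<sigma>] unfolding is_matching_def by blast
  then have "card (\<Union>M) \<le> card (sh_vertices n q)"
    by (rule card_mono[OF finite_sh_vertices])
  then show ?thesis using card_Union_matching[OF assms] by (simp add: card_sh_vertices)
qed

lemma sh_nu_eq_if_perfect_matching:
  assumes "is_perfect_matching n r q \<sigma> M" and "0 < r"
  shows "sh_nu n r q \<sigma> = n * q div r"
  unfolding sh_nu_def
proof (rule Max_eqI)
  have "{M. is_matching n r q \<sigma> M} \<subseteq> Pow (sh_edges n r q \<sigma>)"
    unfolding is_matching_def by auto
  then show "finite (card ` {M. is_matching n r q \<sigma> M})"
    using finite_sh_edges by (meson finite_Pow_iff finite_imageI finite_subset)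
next
  fix k assume "k \<in> card ` {M. is_matching n r q \<sigma> M}"
  then show "k \<le> n * q div r"
    using card_matching_mult_le \<open>0 < r\<close> by (auto simp: less_eq_div_iff_mult_less_eq)
next
  have "is_matching n r q \<sigma> M" and "card M * r = n * q"
    using assms card_Union_matching card_sh_vertices unfolding is_perfect_matching_def by metis+
  moreover have "n * q div r = card M"
    using \<open>card M * r = n * q\<close> \<open>0 < r\<close> by (metis nonzero_mult_div_cancel_right not_less0)
  ultimately show "n * q div r \<in> card ` {M. is_matching n r q \<sigma> M}" by blast
qed

text \<open>\<Phi> d describes the d-th edge of a matching: it puts slot p on vertex \<Phi> d p.\<close>

definition placement_family ::
    "'d set \<Rightarrow> (nat \<times> nat) set \<Rightarrow> nat \<Rightarrow> nat \<Rightarrow> ('d \<Rightarrow> nat \<times> nat \<Rightarrow> nat \<times> nat) \<Rightarrow> bool" where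
  "placement_family D P n q \<Phi> \<longleftrightarrow> inj_on (\<lambda>(d, p). \<Phi> d p) (D \<times> P) \<and>
     (\<forall>d\<in>D. \<Phi> d ` P \<subseteq> sh_vertices n q \<and> separates_parts P (\<Phi> d))"

lemma inj_on_case_prod_TimesI:
  assumes "\<And>d p d' p'. d \<in> D \<Longrightarrow> p \<in> P \<Longrightarrow> d' \<in> D \<Longrightarrow> p' \<in> P \<Longrightarrow> f d p = f d' p'
    \<Longrightarrow> d = d' \<and> p = p'"
  shows "inj_on (\<lambda>(d, p). f d p) (D \<times> P)"
proof (rule inj_onI)
  fix x y assume "x \<in> D \<times> P" "y \<in> D \<times> P" "(\<lambda>(d, p). f d p) x = (\<lambda>(d, p). f d p) y"
  then show "x = y" using assms by (cases x; cases y) auto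
qed

lemma placement_family_lt:
  assumes "placement_family D P n q \<Phi>" "d \<in> D" "p \<in> P"
  shows "fst (\<Phi> d p) < n" and "snd (\<Phi> d p) < q"
  using assms unfolding placement_family_def sh_vertices_def by fastforce+

lemma perfect_matching_of_placement_family:
  assumes pos: "\<forall>x\<in>set \<sigma>. 0 < x"
    and fam: "placement_family D (slots \<sigma>) n q \<Phi>"
    and card: "card D * sum_list \<sigma> = n * q"
  shows "is_perfect_matching n (sum_list \<sigma>) q \<sigma> ((\<lambda>d. \<Phi> d ` slots \<sigma>) ` D)"
proof -
  let ?M = "(\<lambda>d. \<Phi> d ` slots \<sigma>) ` D"
  have inj: "inj_on (\<lambda>(d, p). \<Phi> d p) (D \<times> slots \<sigma>)"
    and sub: "\<And>d. d \<in> D \<Longrightarrow> \<Phi> d ` slots \<sigma> \<subseteq> sh_vertices n q"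
    and sep: "\<And>d. d \<in> D \<Longrightarrow> separates_parts (slots \<sigma>) (\<Phi> d)"
    using fam unfolding placement_family_def by auto
  have inj_d: "inj_on (\<Phi> d) (slots \<sigma>)" if "d \<in> D" for d
  proof (rule inj_onI)
    fix p p' assume "p \<in> slots \<sigma>" "p' \<in> slots \<sigma>" "\<Phi> d p = \<Phi> d p'"
    then show "p = p'" using inj_onD[OF inj, of "(d, p)" "(d, p')"] that by simp
  qed
  have "?M \<subseteq> sh_edges n (sum_list \<sigma>) q \<sigma>"
    using placement_in_sh_edges[OF pos inj_d sub sep] by (rule image_subsetI)
  moreover have "e \<inter> e' = {}" if edges: "e \<in> ?M" "e' \<in> ?M" and "e \<noteq> e'" for e e'
  proof -
    obtain d d' where d: "d \<in> D" "e = \<Phi> d ` slots \<sigma>" and d': "d' \<in> D" "e' = \<Phi> d' ` slots \<sigma>"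
      using edges by blast
    have "\<Phi> d p \<noteq> \<Phi> d' p'" if "p \<in> slots \<sigma>" "p' \<in> slots \<sigma>" for p p'
      using inj_onD[OF inj, of "(d, p)" "(d', p')"] d d' that \<open>e \<noteq> e'\<close> by auto
    then show ?thesis using d d' by blast
  qed
  moreover have "\<Union>?M = sh_vertices n q"
  proof (rule card_subset_eq[OF finite_sh_vertices])
    show "\<Union>?M \<subseteq> sh_vertices n q" using sub by blast
    have "\<Union>?M = (\<lambda>(d, p). \<Phi> d p) ` (D \<times> slots \<sigma>)" by auto
    then show "card (\<Union>?M) = card (sh_vertices n q)"
      using card inj by (simp add: card_image card_cartesian_product card_slots card_sh_vertices)
  qed
  ultimately show ?thesis unfolding is_perfect_matching_def is_matching_def by blast
qed

lemma sum_list_eq_sum_partition: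
  assumes "A \<inter> B = {}" and "A \<union> B = {..<length \<sigma>}"
  shows "sum_list \<sigma> = (\<Sum>j\<in>A. \<sigma> ! j) + (\<Sum>j\<in>B. \<sigma> ! j)"
proof -
  have "finite A" "finite B" using assms(2) by (metis finite_Un finite_lessThan)+
  then show ?thesis
    using assms by (simp add: sum_list_sum_nth atLeast0LessThan sum.union_disjoint[symmetric])
qed

lemma mult_add_less_mult_eqD:
  fixes m :: nat
  assumes "y < m" "y' < m" "x * m + y = x' * m + y'"
  shows "x = x'" and "y = y'"
proof -
  have "(x * m + y) div m = x" "(x * m + y) mod m = y"
    and "(x' * m + y') div m = x'" "(x' * m + y') mod m = y'"
    using assms(1,2) by simp_all
  then show "x = x'" and "y = y'" using assms(3) by metis+
qed

lemma mod_add_left_cancel_less: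
  fixes e x y a :: nat
  assumes "x < a" "y < a" "(e + x) mod a = (e + y) mod a"
  shows "x = y"
  using assms cong_add_lcancel_nat[of e x y a] unfolding cong_def by simp

definition cyclic_tile :: "nat \<Rightarrow> nat \<Rightarrow> ('p \<Rightarrow> nat) \<Rightarrow> ('p \<Rightarrow> nat) \<Rightarrow> nat \<Rightarrow> 'p \<Rightarrow> nat \<times> nat" where
  "cyclic_tile a q h s e p = ((e + s p) mod a, h p * (q div a) + e div a)"

lemma cyclic_tile_mem:
  assumes "h p < a" "a dvd q" "e < q"
  shows "cyclic_tile a q h s e p \<in> {..<a} \<times> {..<q}"
proof -
  obtain m where q: "q = a * m" using assms(2) by blast
  have "e div a < m" using assms(3) q by (simp add: less_mult_imp_div_less mult.commute)
  then have "h p * m + e div a < (h p + 1) * m" by simp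
  also have "\<dots> \<le> a * m" using assms(1) by (intro mult_right_mono) auto
  finally show ?thesis
    using assms(1) q unfolding cyclic_tile_def by auto
qed

lemma inj_on_cyclic_tile:
  assumes "inj_on h P" "h ` P \<subseteq> {..<a}" "a dvd q"
  shows "inj_on (\<lambda>(e, p). cyclic_tile a q h s e p) ({..<q} \<times> P)"
proof (rule inj_on_case_prod_TimesI)
  fix e p e' p'
  assume e: "e \<in> {..<q}" "e' \<in> {..<q}" and p: "p \<in> P" "p' \<in> P"
    and eq: "cyclic_tile a q h s e p = cyclic_tile a q h s e' p'"
  obtain m where q: "q = a * m" using assms(3) by blast
  have "0 < a" using assms(2) p by fastforce
  have "e div a < m" "e' div a < m"
    using e q by (simp_all add: less_mult_imp_div_less mult.commute)
  moreover have "h p * m + e div a = h p' * m + e' div a"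
    using eq q \<open>0 < a\<close> unfolding cyclic_tile_def by simp
  ultimately have "h p = h p'" and div_eq: "e div a = e' div a"
    using mult_add_less_mult_eqD by blast+
  then have "p = p'" using assms(1) p by (auto dest: inj_onD)
  then have "(e + s p) mod a = (e' + s p) mod a" using eq unfolding cyclic_tile_def by simp
  then have "e mod a = e' mod a"
    using cong_add_rcancel_nat[of e "s p" e' a] unfolding cong_def by simp
  with div_eq \<open>p = p'\<close> show "e = e' \<and> p = p'" by (metis div_mult_mod_eq)
qed

definition slots_on :: "nat list \<Rightarrow> nat set \<Rightarrow> (nat \<times> nat) set" where
  "slots_on \<sigma> J = {p \<in> slots \<sigma>. fst p \<in> J}"

lemma card_slots_on:
  assumes "J \<subseteq> {..<length \<sigma>}"
  shows "card (slots_on \<sigma> J) = (\<Sum>j\<in>J. \<sigma> ! j)"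
proof -
  have "slots_on \<sigma> J = Sigma J (\<lambda>j. {..<\<sigma> ! j})"
    using assms unfolding slots_on_def slots_def by auto
  moreover have "finite J" using assms finite_subset by blast
  ultimately show ?thesis by (simp add: card_SigmaI)
qed

lemma cyclic_side_placement:
  assumes pos: "\<forall>x\<in>set \<sigma>. 0 < x"
    and J: "J \<subseteq> {..<length \<sigma>}" and dvd: "(\<Sum>j\<in>J. \<sigma> ! j) dvd q"
  obtains T where "placement_family {..<q} (slots_on \<sigma> J) (\<Sum>j\<in>J. \<sigma> ! j) q T"
proof -
  let ?P = "slots_on \<sigma> J" and ?a = "\<Sum>j\<in>J. \<sigma> ! j"
  have "finite ?P" unfolding slots_on_def slots_def by simp
  then obtain h where "bij_betw h ?P {0..<?a}"
    using ex_bij_betw_finite_nat[of ?P] unfolding card_slots_on[OF J] by blast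
  then have h_inj: "inj_on h ?P" and h_lt: "h ` ?P \<subseteq> {..<?a}"
    unfolding bij_betw_def by auto
  define T where "T = cyclic_tile ?a q h (\<lambda>p. h (fst p, 0))"
  have first_slot: "(fst p, 0) \<in> ?P" if "p \<in> ?P" for p
    using that pos unfolding slots_on_def slots_def by auto
  have "inj_on (\<lambda>(e, p). T e p) ({..<q} \<times> ?P)"
    unfolding T_def using h_inj h_lt dvd by (rule inj_on_cyclic_tile)
  moreover have "T e ` ?P \<subseteq> sh_vertices ?a q" if "e < q" for e
  proof (rule image_subsetI)
    fix p assume "p \<in> ?P"
    then show "T e p \<in> sh_vertices ?a q"
      unfolding T_def sh_vertices_def using h_lt dvd that by (intro cyclic_tile_mem) auto
  qed
  moreover have "separates_parts ?P (T e)" for e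
    unfolding separates_parts_def
  proof (intro ballI iffI)
    fix p p' assume p: "p \<in> ?P" "p' \<in> ?P" and "fst (T e p) = fst (T e p')"
    then have "(e + h (fst p, 0)) mod ?a = (e + h (fst p', 0)) mod ?a"
      unfolding T_def cyclic_tile_def by simp
    then have "h (fst p, 0) = h (fst p', 0)"
      using mod_add_left_cancel_less h_lt first_slot p by blast
    then have "(fst p, 0::nat) = (fst p', 0)" using inj_onD[OF h_inj] first_slot p by blast
    then show "fst p = fst p'" by simp
  qed (simp add: T_def cyclic_tile_def)
  ultimately have "placement_family {..<q} ?P ?a q T"
    unfolding placement_family_def by blast
  then show thesis by (rule that)
qed

lemma placement_family_side_by_side:
  assumes P: "placement_family E P a q TP" and Q: "placement_family E Q b q TQ"
    and disj: "fst ` P \<inter> fst ` Q = {}"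
  shows "placement_family E (P \<union> Q) (a + b) q
    (\<lambda>e p. if p \<in> P then TP e p else apfst ((+) a) (TQ e p))"
proof -
  define \<Psi> where "\<Psi> e p = (if p \<in> P then TP e p else apfst ((+) a) (TQ e p))" for e p
  have P_inj: "inj_on (\<lambda>(e, p). TP e p) (E \<times> P)" and Q_inj: "inj_on (\<lambda>(e, p). TQ e p) (E \<times> Q)"
    and P_sep: "\<And>e. e \<in> E \<Longrightarrow> separates_parts P (TP e)"
    and Q_sep: "\<And>e. e \<in> E \<Longrightarrow> separates_parts Q (TQ e)"
    using P Q unfolding placement_family_def by auto
  have mem: "\<Psi> e p \<in> sh_vertices (a + b) q" and in_P_iff: "fst (\<Psi> e p) < a \<longleftrightarrow> p \<in> P"
    if "e \<in> E" "p \<in> P \<union> Q" for e p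
    using that placement_family_lt[OF P that(1), of p] placement_family_lt[OF Q that(1), of p]
    unfolding \<Psi>_def sh_vertices_def by (auto simp: mem_Times_iff)
  have "inj_on (\<lambda>(e, p). \<Psi> e p) (E \<times> (P \<union> Q))"
  proof (rule inj_on_case_prod_TimesI)
    fix e p e' p' assume e: "e \<in> E" "e' \<in> E" and p: "p \<in> P \<union> Q" "p' \<in> P \<union> Q"
      and eq: "\<Psi> e p = \<Psi> e' p'"
    then have "p \<in> P \<longleftrightarrow> p' \<in> P" using in_P_iff by metis
    then show "e = e' \<and> p = p'"
      using p eq inj_onD[OF P_inj, of "(e, p)" "(e', p')"] inj_onD[OF Q_inj, of "(e, p)" "(e', p')"] e
      unfolding \<Psi>_def by (auto simp: apfst_def map_prod_def split: prod.splits)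
  qed
  moreover have "separates_parts (P \<union> Q) (\<Psi> e)" if "e \<in> E" for e
    unfolding separates_parts_def
  proof (intro ballI)
    fix p p' assume p: "p \<in> P \<union> Q" "p' \<in> P \<union> Q"
    show "fst (\<Psi> e p) = fst (\<Psi> e p') \<longleftrightarrow> fst p = fst p'"
    proof (cases "p \<in> P \<longleftrightarrow> p' \<in> P")
      case True
      then show ?thesis
        using p P_sep[OF that] Q_sep[OF that] unfolding \<Psi>_def separates_parts_def by auto
    next
      case False
      then have "fst p \<noteq> fst p'" using p disj by blast
      then show ?thesis using False in_P_iff[OF that p(1)] in_P_iff[OF that p(2)] by auto
    qed
  qed
  moreover have "\<Psi> e ` (P \<union> Q) \<subseteq> sh_vertices (a + b) q" if "e \<in> E" for e
    using mem that by blast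
  ultimately have "placement_family E (P \<union> Q) (a + b) q \<Psi>"
    unfolding placement_family_def by blast
  then show ?thesis unfolding \<Psi>_def[abs_def] .
qed

lemma block_placement_family:
  assumes pos: "\<forall>x\<in>set \<sigma>. 0 < x"
    and AB: "A \<inter> B = {}" "A \<union> B = {..<length \<sigma>}"
    and dvd: "(\<Sum>j\<in>A. \<sigma> ! j) dvd q" "(\<Sum>j\<in>B. \<sigma> ! j) dvd q"
  obtains \<Psi> where "placement_family {..<q} (slots \<sigma>) (sum_list \<sigma>) q \<Psi>"
proof -
  have sub: "A \<subseteq> {..<length \<sigma>}" "B \<subseteq> {..<length \<sigma>}" using AB(2) by auto
  obtain TA where "placement_family {..<q} (slots_on \<sigma> A) (\<Sum>j\<in>A. \<sigma> ! j) q TA"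
    by (rule cyclic_side_placement[OF pos sub(1) dvd(1)])
  moreover obtain TB where "placement_family {..<q} (slots_on \<sigma> B) (\<Sum>j\<in>B. \<sigma> ! j) q TB"
    by (rule cyclic_side_placement[OF pos sub(2) dvd(2)])
  moreover have "fst ` slots_on \<sigma> A \<inter> fst ` slots_on \<sigma> B = {}"
  proof -
    have "fst ` slots_on \<sigma> J \<subseteq> J" for J unfolding slots_on_def by auto
    then show ?thesis using AB(1) by blast
  qed
  ultimately have fam: "placement_family {..<q} (slots_on \<sigma> A \<union> slots_on \<sigma> B)
      ((\<Sum>j\<in>A. \<sigma> ! j) + (\<Sum>j\<in>B. \<sigma> ! j)) q
      (\<lambda>e p. if p \<in> slots_on \<sigma> A then TA e p else apfst ((+) (\<Sum>j\<in>A. \<sigma> ! j)) (TB e p))"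
    by (rule placement_family_side_by_side)
  have slots: "slots_on \<sigma> A \<union> slots_on \<sigma> B = slots \<sigma>"
    unfolding slots_on_def slots_def AB(2)[symmetric] by auto
  show thesis
    using fam unfolding slots sum_list_eq_sum_partition[OF AB, symmetric] by (rule that)
qed

lemma stacked_placement_family:
  assumes fam: "placement_family E P r q \<Psi>"
  shows "placement_family ({..<k} \<times> E) P (k * r) q
    (\<lambda>(G, e) p. (G * r + fst (\<Psi> e p), snd (\<Psi> e p)))"
proof -
  let ?\<Phi> = "\<lambda>(G, e) p. (G * r + fst (\<Psi> e p), snd (\<Psi> e p))"
  have inj: "inj_on (\<lambda>(e, p). \<Psi> e p) (E \<times> P)"
    and sep: "\<And>e. e \<in> E \<Longrightarrow> separates_parts P (\<Psi> e)"
    using fam unfolding placement_family_def by auto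
  note lt = placement_family_lt[OF fam]
  have "inj_on (\<lambda>(d, p). ?\<Phi> d p) (({..<k} \<times> E) \<times> P)"
  proof (rule inj_on_case_prod_TimesI)
    fix d p d' p' assume d: "d \<in> {..<k} \<times> E" "d' \<in> {..<k} \<times> E" and p: "p \<in> P" "p' \<in> P"
      and eq: "?\<Phi> d p = ?\<Phi> d' p'"
    obtain G e G' e' where d_def: "d = (G, e)" "d' = (G', e')" and e: "e \<in> E" "e' \<in> E"
      using d by blast
    have "G * r + fst (\<Psi> e p) = G' * r + fst (\<Psi> e' p')" using eq d_def by simp
    then have "G = G'" and "fst (\<Psi> e p) = fst (\<Psi> e' p')"
      using mult_add_less_mult_eqD lt(1)[OF e(1) p(1)] lt(1)[OF e(2) p(2)] by blast+
    moreover have "snd (\<Psi> e p) = snd (\<Psi> e' p')" using eq d_def by simp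
    ultimately have "\<Psi> e p = \<Psi> e' p'" by (simp add: prod_eq_iff)
    then have "(e, p) = (e', p')" using inj_onD[OF inj, of "(e, p)" "(e', p')"] e p by simp
    with \<open>G = G'\<close> show "d = d' \<and> p = p'" unfolding d_def by simp
  qed
  moreover have "?\<Phi> d ` P \<subseteq> sh_vertices (k * r) q" if d: "d \<in> {..<k} \<times> E" for d
  proof (rule image_subsetI)
    fix p assume p: "p \<in> P"
    obtain G e where d_def: "d = (G, e)" and G: "G < k" and e: "e \<in> E" using d by blast
    have "G * r + fst (\<Psi> e p) < (G + 1) * r" using lt e p by simp
    also have "\<dots> \<le> k * r" using G by (intro mult_right_mono) auto
    finally show "?\<Phi> d p \<in> sh_vertices (k * r) q"
      using lt e p unfolding d_def sh_vertices_def by simp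
  qed
  moreover have "separates_parts P (?\<Phi> d)" if "d \<in> {..<k} \<times> E" for d
    using sep that unfolding separates_parts_def by auto
  ultimately show ?thesis
    unfolding placement_family_def by blast
qed

lemma ex_perfect_matching_if_dvd:
  assumes pos: "\<forall>x\<in>set \<sigma>. 0 < x"
    and AB: "A \<inter> B = {}" "A \<union> B = {..<length \<sigma>}"
    and dvd: "(\<Sum>j\<in>A. \<sigma> ! j) dvd q" "(\<Sum>j\<in>B. \<sigma> ! j) dvd q" "sum_list \<sigma> dvd n"
  shows "\<exists>M. is_perfect_matching n (sum_list \<sigma>) q \<sigma> M"
proof -
  let ?r = "sum_list \<sigma>"
  obtain \<Psi> where block: "placement_family {..<q} (slots \<sigma>) ?r q \<Psi>"
    using block_placement_family[OF pos AB dvd(1,2)] by blast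
  have n: "n div ?r * ?r = n" using dvd(3) by simp
  have fam: "placement_family ({..<n div ?r} \<times> {..<q}) (slots \<sigma>) n q
      (\<lambda>(G, e) p. (G * ?r + fst (\<Psi> e p), snd (\<Psi> e p)))"
    using stacked_placement_family[OF block, of "n div ?r"] unfolding n .
  have "card ({..<n div ?r} \<times> {..<q}) * ?r = (n div ?r * ?r) * q"
    by (simp add: card_cartesian_product ac_simps)
  then have card: "card ({..<n div ?r} \<times> {..<q}) * ?r = n * q" unfolding n .
  show ?thesis using perfect_matching_of_placement_family[OF pos fam card] by blast
qed

theorem lemma3p9:
  fixes n r q :: nat and \<sigma> :: "nat list" and A B :: "nat set"
  assumes "is_partition \<sigma> r"
    and "r_good \<sigma> r"
    and "A \<inter> B = {}" and "A \<union> B = {..<length \<sigma>}"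
    and "gcd (\<Sum>j\<in>A. \<sigma> ! j) (\<Sum>j\<in>B. \<sigma> ! j) = 1"
    and "gcd (\<Sum>j\<in>A. \<sigma> ! j) r = 1"
    and "gcd (\<Sum>j\<in>B. \<sigma> ! j) r = 1"
    and "r dvd n"
    and "lcm (\<Sum>j\<in>A. \<sigma> ! j) (\<Sum>j\<in>B. \<sigma> ! j) dvd q"
  shows "(\<exists>M. is_perfect_matching n r q \<sigma> M) \<and> sh_nu n r q \<sigma> = n * q div r"
proof -
  let ?a = "\<Sum>j\<in>A. \<sigma> ! j" and ?b = "\<Sum>j\<in>B. \<sigma> ! j"
  have pos: "\<forall>x\<in>set \<sigma>. 0 < x" and r: "r = sum_list \<sigma>"
    using assms(1) unfolding is_partition_def by auto
  have dvd: "?a dvd q" "?b dvd q"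
    using assms(9) dvd_lcm1 dvd_lcm2 dvd_trans by blast+
  \<comment> \<open>Only the divisibilities drive the construction; gcd a r = 1 merely excludes r = 0.\<close>
  have "0 < r"
  proof (rule ccontr)
    assume "\<not> 0 < r"
    then have "?a = 1" using assms(6) by simp
    moreover have "?a \<le> r" using r sum_list_eq_sum_partition[OF assms(3,4)] by simp
    ultimately show False using \<open>\<not> 0 < r\<close> by simp
  qed
  obtain M where "is_perfect_matching n r q \<sigma> M"
    using ex_perfect_matching_if_dvd[OF pos assms(3,4) dvd] assms(8) r by blast
  then show ?thesis using sh_nu_eq_if_perfect_matching \<open>0 < r\<close> by blast
qed

end
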